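(* Let $N\ge2$, $L^x,L^y>0$, and for each box $k\in\{1,\dots,N\}$ let constants $lb^x_k,lb^y_k>0$ be given. Let $F$ be the set of $(c,\ell,z,d)$, where $c=(c^s_k)$, $\ell=(\ell^s_k)$ for $k\in\{1,\dots,N\}$, $s\in\{x,y\}$, $z=(z^s_{p,q})\in\{0,1\}$ for all $s\in\{x,y\}$ and ordered pairs of distinct boxes $(p,q)$, and $d=(d^s_{i,j})$ with $d^s_{i,j}=d^s_{j,i}$ for unordered pairs, satisfying for every pair of distinct boxes $i,j$, every $s\in\{x,y\}$ and every $(p,q)\in\{(i,j),(j,i)\}$: \begin{align*} &\tfrac12\ell^s_p+lb^s_q z^s_{q,p}\le c^s_p\le L^s-\tfrac12\ell^s_p-lb^s_q z^s_{p,q},\qquad c^s_p+\tfrac12\ell^s_p\le c^s_q-\tfrac12\ell^s_q+L^s(1-z^s_{p,q}),\qquad \ell^s_p\ge lb^s_p,\\ &z^x_{i,j}+z^x_{j,i}+z^y_{i,j}+z^y_{j,i}\ge1,\qquad z^s_{i,j}+z^s_{j,i}\le1,\\ &c^s_p+\tfrac12\ell^s_p+L^s z^s_{p,q}\ge c^s_q-\tfrac12\ell^s_q+(lb^s_p+lb^s_q)(z^s_{i,j}+z^s_{j,i}),\\ &d^s_{i,j}\ge c^s_i-c^s_j,\qquad d^s_{i,j}\ge c^s_j-c^s_i. \end{align*} Fix distinct boxes $i,j$, an integer $m\ge1$, and distinct boxes $t^0=i,t^1,\dots,t^m,t^{m+1}=j$ (the path $P$). Fix $s\in\{x,y\}$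 and $\{p,q\}=\{i,j\}$. Define $\mathscr{M}^s_P(z)=1+\sum_{\xi=1}^{m+1}(z^s_{t^{\xi-1},t^\xi}-1)$ and $\gamma_P=\sum_{\xi=1}^m lb^s_{t^\xi}$. Then every point of $F$ satisfies \begin{align*} d^s_{i,j}&\ge\tfrac12(\ell^s_i+\ell^s_j)-L^s(1-z^s_{i,j}-z^s_{j,i})+\gamma_P\mathscr{M}^s_P(z),\\ d^s_{i,j}&\ge c^s_p-c^s_q+\ell^s_p+lb^s_q(z^s_{i,j}+z^s_{j,i})-L^s(1-z^s_{p,q})+\gamma_P\mathscr{M}^s_P(z),\\ d^s_{i,j}&\ge c^s_i-c^s_j+(lb^s_i+lb^s_j)z^s_{i,j}+\gamma_P\mathscr{M}^s_P(z),\\ 2d^s_{i,j}&\ge\ell^s_p+lb^s_q(z^s_{i,j}+z^s_{j,i})-L^s(1-z^s_{i,j}-z^s_{j,i})+2\gamma_P\mathscr{M}^s_P(z),\\ \tfrac12\ell^s_j+lb^s_i z^s_{i,j}+\gamma_P\mathscr{M}^s_P(z)&\le c^s_j,\\ c^s_i+\gamma_P\mathscr{M}^s_P(z)&\le L^s-\tfrac12\ell^s_i-lb^s_j z^s_{i,j},\\ c^s_i+\tfrac12\ell^s_i+\gamma_P\mathscr{M}^s_P(z)&\le c^s_j-\tfrac12\ell^s_j+L^s(1-z^s_{i,j}). \end{align*}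
   Context: Box $k$ has center $(c^x_k,c^y_k)$ and side lengths $(\ell^x_k,\ell^y_k)$. The set $F$ is the $N$-box refined unary formulation (the pairwise refined unary formulations for all pairs, sharing variables) augmented with the standard linearization variables $d^s_{i,j}$ of the Manhattan objective $|c^s_i-c^s_j|$. In the paper $lb^s_k=\beta_k/ub^s_k$ with $ub^s_k=\min\{\sqrt{\alpha_k\beta_k},L^s\}$. *)

theory Defs
  imports Complex_Main
begin

datatype dir = DX | DY

text \<open>Variables:
  c s k, l s k (centres and side lengths), z s p q (binary, ordered pairs of distinct boxes),
  d s i j (Manhattan linearisation variables, symmetric).\<close>
definition inF ::
  "nat \<Rightarrow> (dir \<Rightarrow> real) \<Rightarrow> (dir \<Rightarrow> nat \<Rightarrow> real)
   \<Rightarrow> (dir \<Rightarrow> nat \<Rightarrow> real) \<Rightarrow> (dir \<Rightarrow> nat \<Rightarrow> real)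
   \<Rightarrow> (dir \<Rightarrow> nat \<Rightarrow> nat \<Rightarrow> real) \<Rightarrow> (dir \<Rightarrow> nat \<Rightarrow> nat \<Rightarrow> real) \<Rightarrow> bool"
where
  "inF N L lb c l z d \<longleftrightarrow>
    (\<forall>s p q. p \<in> {1..N} \<and> q \<in> {1..N} \<and> p \<noteq> q \<longrightarrow> z s p q \<in> {0, 1}) \<and>
    (\<forall>s i j. i \<in> {1..N} \<and> j \<in> {1..N} \<and> i \<noteq> j \<longrightarrow> d s i j = d s j i) \<and>
    (\<forall>i j. i \<in> {1..N} \<and> j \<in> {1..N} \<and> i \<noteq> j \<longrightarrow>
      z DX i j + z DX j i + z DY i j + z DY j i \<ge> 1 \<and>
      (\<forall>s. z s i j + z s j i \<le> 1 \<and>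
           d s i j \<ge> c s i - c s j \<and> d s i j \<ge> c s j - c s i \<and>
           (\<forall>(p, q) \<in> {(i, j), (j, i)}.
              l s p / 2 + lb s q * z s q p \<le> c s p \<and>
              c s p \<le> L s - l s p / 2 - lb s q * z s p q \<and>
              c s p + l s p / 2 \<le> c s q - l s q / 2 + L s * (1 - z s p q) \<and>
              l s p \<ge> lb s p \<and>
              c s p + l s p / 2 + L s * z s p q
                \<ge> c s q - l s q / 2 + (lb s p + lb s q) * (z s i j + z s j i))))"

definition pathM :: "(dir \<Rightarrow> nat \<Rightarrow> nat \<Rightarrow> real) \<Rightarrow> dir \<Rightarrow> nat \<Rightarrow> (nat \<Rightarrow> nat) \<Rightarrow> real" where
  "pathM z s m t = 1 + (\<Sum>\<xi> = 1..m+1. (z s (t (\<xi> - 1)) (t \<xi>) - 1))"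

definition pathGamma :: "(dir \<Rightarrow> nat \<Rightarrow> real) \<Rightarrow> dir \<Rightarrow> nat \<Rightarrow> (nat \<Rightarrow> nat) \<Rightarrow> real" where
  "pathGamma lb s m t = (\<Sum>\<xi> = 1..m. lb s (t \<xi>))"

end

theory Submission
  imports Defs
begin

text \<open>Write E for the path term gamma_P * M_P(z). Since the z are binary, M_P(z) is 1 if
  every arc of the path is ordered in direction s and at most 0 otherwise. In the latter case
  E \<le> 0 and the seven inequalities are weakenings of valid pairwise cuts of F. In the former
  case the boxes t^1, ..., t^m lie in order between i and j, so j sits at least gamma_P = E
  further to the right than non-overlap alone forces, and this gap absorbs E in every
  inequality.\<close>

lemma inF_pairD:
  assumes "inF N L lb c l z d" "a \<in> {1..N}" "b \<in> {1..N}" "a \<noteq> b"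
  shows "z s a b = 0 \<or> z s a b = 1"
    and "z s a b + z s b a \<le> 1"
    and "d s a b = d s b a"
    and "c s a - c s b \<le> d s a b"
    and "l s a / 2 + lb s b * z s b a \<le> c s a"
    and "c s a \<le> L s - l s a / 2 - lb s b * z s a b"
    and "c s a + l s a / 2 \<le> c s b - l s b / 2 + L s * (1 - z s a b)"
    and "lb s a \<le> l s a"
    and "c s b - l s b / 2 + (lb s a + lb s b) * (z s a b + z s b a)
           \<le> c s a + l s a / 2 + L s * z s a b"
  using assms unfolding inF_def by auto

lemma chain_gap_lower_bound:
  fixes c l lb :: "'a \<Rightarrow> real" and t :: "nat \<Rightarrow> 'a"
  assumes "\<And>\<xi>. \<xi> \<in> {1..Suc n} \<Longrightarrow> c (t (\<xi> - 1)) + l (t (\<xi> - 1)) / 2 \<le> c (t \<xi>) - l (t \<xi>) / 2"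
    and "\<And>\<xi>. \<xi> \<in> {1..n} \<Longrightarrow> lb (t \<xi>) \<le> l (t \<xi>)"
  shows "c (t 0) + l (t 0) / 2 + (\<Sum>\<xi> = 1..n. lb (t \<xi>)) \<le> c (t (Suc n)) - l (t (Suc n)) / 2"
  using assms
proof (induction n)
  case 0
  then show ?case by fastforce
next
  case (Suc n)
  have "c (t 0) + l (t 0) / 2 + (\<Sum>\<xi> = 1..n. lb (t \<xi>)) \<le> c (t (Suc n)) - l (t (Suc n)) / 2"
    using Suc by simp
  moreover have "c (t (Suc n)) + l (t (Suc n)) / 2 \<le> c (t (Suc (Suc n))) - l (t (Suc (Suc n))) / 2"
    using Suc.prems(1)[of "Suc (Suc n)"] by simp
  moreover have "lb (t (Suc n)) \<le> l (t (Suc n))"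
    using Suc.prems(2) by simp
  ultimately show ?case by simp
qed

lemma pathM_nonpos:
  assumes "\<forall>\<xi> \<in> {1..m+1}. z s (t (\<xi> - 1)) (t \<xi>) \<le> 1"
    and "\<xi>0 \<in> {1..m+1}" "z s (t (\<xi>0 - 1)) (t \<xi>0) = 0"
  shows "pathM z s m t \<le> 0"
proof -
  let ?e = "\<lambda>\<xi>. z s (t (\<xi> - 1)) (t \<xi>) - 1"
  have "(\<Sum>\<xi> = 1..m+1. ?e \<xi>) = ?e \<xi>0 + (\<Sum>\<xi> \<in> {1..m+1} - {\<xi>0}. ?e \<xi>)"
    using assms(2) by (intro sum.remove) auto
  moreover have "(\<Sum>\<xi> \<in> {1..m+1} - {\<xi>0}. ?e \<xi>) \<le> 0"
    using assms(1) by (intro sum_nonpos) auto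
  ultimately show ?thesis
    using assms(3) unfolding pathM_def by simp
qed

lemma path_term_nonpos_or_gap:
  assumes F: "inF N L lb c l z d"
    and lbpos: "\<forall>k \<in> {1..N}. lb s k > 0"
    and path: "t 0 = i" "t (m + 1) = j" "\<forall>\<xi> \<in> {0..m+1}. t \<xi> \<in> {1..N}" "inj_on t {0..m+1}"
  shows "pathGamma lb s m t * pathM z s m t \<le> 0 \<or>
         c s i + l s i / 2 + pathGamma lb s m t * pathM z s m t \<le> c s j - l s j / 2"
proof -
  have edge: "t (\<xi> - 1) \<in> {1..N}" "t \<xi> \<in> {1..N}" "t (\<xi> - 1) \<noteq> t \<xi>" if "\<xi> \<in> {1..m+1}" for \<xi>
    using that path(3) inj_onD[OF path(4), of "\<xi> - 1" \<xi>] by fastforce+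
  have gamma_nonneg: "pathGamma lb s m t \<ge> 0"
    unfolding pathGamma_def using lbpos path(3) by (intro sum_nonneg) (auto intro: less_imp_le)
  show ?thesis
  proof (cases "\<forall>\<xi> \<in> {1..m+1}. z s (t (\<xi> - 1)) (t \<xi>) = 1")
    case True
    then have "pathM z s m t = 1"
      unfolding pathM_def by simp
    moreover have "c s (t 0) + l s (t 0) / 2 + pathGamma lb s m t
        \<le> c s (t (Suc m)) - l s (t (Suc m)) / 2"
      unfolding pathGamma_def
    proof (rule chain_gap_lower_bound)
      fix \<xi> assume "\<xi> \<in> {1..Suc m}"
      then show "c s (t (\<xi> - 1)) + l s (t (\<xi> - 1)) / 2 \<le> c s (t \<xi>) - l s (t \<xi>) / 2"
        using inF_pairD(7)[OF F edge, of \<xi> s] True by simp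
    next
      fix \<xi> assume "\<xi> \<in> {1..m}"
      then have "Suc \<xi> \<in> {1..m+1}" by simp
      then show "lb s (t \<xi>) \<le> l s (t \<xi>)"
        using inF_pairD(8)[OF F edge, of "Suc \<xi>" s] by simp
    qed
    ultimately show ?thesis
      using path(1,2) by simp
  next
    case False
    have binary: "z s (t (\<xi> - 1)) (t \<xi>) = 0 \<or> z s (t (\<xi> - 1)) (t \<xi>) = 1"
      if "\<xi> \<in> {1..m+1}" for \<xi>
      using inF_pairD(1)[OF F edge[OF that]] .
    from False obtain \<xi>0 where "\<xi>0 \<in> {1..m+1}" "z s (t (\<xi>0 - 1)) (t \<xi>0) = 0"
      using binary by blast
    moreover have "\<forall>\<xi> \<in> {1..m+1}. z s (t (\<xi> - 1)) (t \<xi>) \<le> 1"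
      using binary by fastforce
    ultimately have "pathM z s m t \<le> 0"
      by (intro pathM_nonpos)
    then show ?thesis
      using gamma_nonneg by (simp add: mult_nonneg_nonpos)
  qed
qed

lemma shifted_cuts:
  fixes E :: real
  assumes F: "inF N L lb c l z d"
    and ij: "i \<in> {1..N}" "j \<in> {1..N}" "i \<noteq> j"
    and lbpos: "lb s i > 0" "lb s j > 0"
    and pq: "(p, q) \<in> {(i, j), (j, i)}"
    and shift: "E \<le> 0 \<or> c s i + l s i / 2 + E \<le> c s j - l s j / 2"
  shows
   "d s i j \<ge> (l s i + l s j) / 2 - L s * (1 - z s i j - z s j i) + E \<and>
    d s i j \<ge> c s p - c s q + l s p + lb s q * (z s i j + z s j i) - L s * (1 - z s p q) + E \<and>
    d s i j \<ge> c s i - c s j + (lb s i + lb s j) * z s i j + E \<and>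
    2 * d s i j \<ge> l s p + lb s q * (z s i j + z s j i) - L s * (1 - z s i j - z s j i) + 2 * E \<and>
    l s j / 2 + lb s i * z s i j + E \<le> c s j \<and>
    c s i + E \<le> L s - l s i / 2 - lb s j * z s i j \<and>
    c s i + l s i / 2 + E \<le> c s j - l s j / 2 + L s * (1 - z s i j)"
proof -
  note Pij = inF_pairD[OF F ij, of s] and Pji = inF_pairD[OF F ij(2,1) ij(3)[symmetric], of s]
  \<comment> \<open>Positivity of \<open>lb\<close> rules out \<open>z\<^sup>s\<^sub>j\<^sub>i = 1\<close> under the second alternative of \<open>shift\<close>.\<close>
  from pq have "p = i \<and> q = j \<or> p = j \<and> q = i" by auto
  then show ?thesis
    using Pij Pji lbpos shift by (elim disjE conjE) (simp_all add: field_simps)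
qed

theorem proposition7p3:
  fixes N :: nat and L :: "dir \<Rightarrow> real" and lb :: "dir \<Rightarrow> nat \<Rightarrow> real"
    and c l :: "dir \<Rightarrow> nat \<Rightarrow> real" and z d :: "dir \<Rightarrow> nat \<Rightarrow> nat \<Rightarrow> real"
    and i j m p q :: nat and t :: "nat \<Rightarrow> nat" and s :: dir
  assumes N2: "N \<ge> 2"
    and Lpos: "\<forall>s'. L s' > 0"
    and lbpos: "\<forall>s'. \<forall>k \<in> {1..N}. lb s' k > 0"
    and ij: "i \<in> {1..N}" "j \<in> {1..N}" "i \<noteq> j"
    and m1: "m \<ge> 1"
    and path: "t 0 = i" "t (m + 1) = j" "\<forall>\<xi> \<in> {0..m+1}. t \<xi> \<in> {1..N}" "inj_on t {0..m+1}"
    and pq: "(p, q) \<in> {(i, j), (j, i)}"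
    and F: "inF N L lb c l z d"
  shows
   "d s i j \<ge> (l s i + l s j) / 2 - L s * (1 - z s i j - z s j i)
              + pathGamma lb s m t * pathM z s m t \<and>
    d s i j \<ge> c s p - c s q + l s p + lb s q * (z s i j + z s j i) - L s * (1 - z s p q)
              + pathGamma lb s m t * pathM z s m t \<and>
    d s i j \<ge> c s i - c s j + (lb s i + lb s j) * z s i j + pathGamma lb s m t * pathM z s m t \<and>
    2 * d s i j \<ge> l s p + lb s q * (z s i j + z s j i) - L s * (1 - z s i j - z s j i)
              + 2 * pathGamma lb s m t * pathM z s m t \<and>
    l s j / 2 + lb s i * z s i j + pathGamma lb s m t * pathM z s m t \<le> c s j \<and>
    c s i + pathGamma lb s m t * pathM z s m t \<le> L s - l s i / 2 - lb s j * z s i j \<and>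
    c s i + l s i / 2 + pathGamma lb s m t * pathM z s m t \<le> c s j - l s j / 2 + L s * (1 - z s i j)"
proof -
  have "pathGamma lb s m t * pathM z s m t \<le> 0 \<or>
        c s i + l s i / 2 + pathGamma lb s m t * pathM z s m t \<le> c s j - l s j / 2"
    using path_term_nonpos_or_gap[OF F _ path] lbpos by blast
  then show ?thesis
    using shifted_cuts[OF F ij _ _ pq] lbpos ij by (simp add: mult.assoc)
qed

end
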